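(* Let $Q$ be a quantity space over a field $K$ and let $\mathsf{C}\in Q/{\sim}$. Then $\mathsf{C}$, with addition defined by $x+y=(\rho+\sigma)\cdot u$ whenever $u$ is a unit quantity for $\mathsf{C}$, $x=\rho\cdot u$ and $y=\sigma\cdot u$, and with scalar multiplication $(\lambda,x)\mapsto\lambda\cdot x$ inherited from $Q$, is a one-dimensional vector space over $K$.
   Context: A scalable monoid over a (unital, associative) ring $R$ is a monoid $X$ (identity $1_X$, product written $xy$) together with a map $R\times X\to X$, $(\alpha,x)\mapsto\alpha\cdot x$, such that $1\cdot x=x$, $\alpha\cdot(\beta\cdot x)=\alpha\beta\cdot x$ and $\alpha\cdot(xy)=(\alpha\cdot x)y=x(\alpha\cdot y)$. A quantity space over a field $K$ is a commutative scalable monoid $Q$ over $K$ for which there exists a basis, i.e. a finite set $\{e_1,\ldots,e_n\}$ of invertible elements of $Q$ such that every $x\in Q$ has a unique expansion $x=\mu\cdot\prod_{i=1}^n e_i^{k_i}$ with $\mu\in K$ and $k_i\in\mathbb{Z}$. On $Q$, $x\sim y$ iff $\alpha\cdot x=\beta\cdot y$ for some $\alpha,\beta\in K$; $Q/{\sim}$ is the set of equivalence classes (dimensions). A unit quantity for a class $\mathsf{C}$ is some $u\in\mathsf{C}$ such that every $x\in\mathsf{C}$ equals $\lambda\cdot u$ for some $\lambda\in K$, and $\lambda\cdot u=\lambda'\cdot u$ implies $\lambda=\lambda'$. (The sum $x+y$ so defined does not depend on the choice of unit quantity $u$.) *)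

theory Defs
  imports Main
begin

text \<open>A quantity space is modelled on an ambient type 'q carrying a commutative
 monoid structure (type class comm_monoid_mult: product and identity 1),
 together with a scalar action smul of the field 'k.\<close>

definition scalable_monoid :: "('k::field \<Rightarrow> 'q::monoid_mult \<Rightarrow> 'q) \<Rightarrow> bool" where
  "scalable_monoid smul \<longleftrightarrow>
     (\<forall>x. smul 1 x = x) \<and>
     (\<forall>a b x. smul a (smul b x) = smul (a * b) x) \<and>
     (\<forall>a x y. smul a (x * y) = smul a x * y \<and> smul a (x * y) = x * smul a y)"

definition invertible_q :: "'q::monoid_mult \<Rightarrow> bool" where
  "invertible_q e \<longleftrightarrow> (\<exists>y. e * y = 1 \<and> y * e = 1)"

definition inv_q :: "'q::monoid_mult \<Rightarrow> 'q" where
  "inv_q e = (THE y. e * y = 1 \<and> y * e = 1)"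

definition zpow_q :: "'q::monoid_mult \<Rightarrow> int \<Rightarrow> 'q" where
  "zpow_q e k = (if 0 \<le> k then e ^ nat k else inv_q e ^ nat (- k))"

definition is_qbasis :: "('k::field \<Rightarrow> 'q::comm_monoid_mult \<Rightarrow> 'q) \<Rightarrow> 'q set \<Rightarrow> bool" where
  "is_qbasis smul E \<longleftrightarrow> finite E \<and> (\<forall>e\<in>E. invertible_q e) \<and>
     (\<forall>x. (\<exists>\<mu> k. x = smul \<mu> (\<Prod>e\<in>E. zpow_q e (k e))) \<and>
          (\<forall>\<mu> k \<mu>' k'. x = smul \<mu> (\<Prod>e\<in>E. zpow_q e (k e)) \<longrightarrow>
                      x = smul \<mu>' (\<Prod>e\<in>E. zpow_q e (k' e)) \<longrightarrow>
                      \<mu> = \<mu>' \<and> (\<forall>e\<in>E. k e = k' e)))"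

definition quantity_space :: "('k::field \<Rightarrow> 'q::comm_monoid_mult \<Rightarrow> 'q) \<Rightarrow> bool" where
  "quantity_space smul \<longleftrightarrow> scalable_monoid smul \<and> (\<exists>E. is_qbasis smul E)"

definition qsim :: "('k::field \<Rightarrow> 'q \<Rightarrow> 'q) \<Rightarrow> ('q \<times> 'q) set" where
  "qsim smul = {(x, y). \<exists>\<alpha> \<beta>. smul \<alpha> x = smul \<beta> y}"

definition unit_quantity :: "('k::field \<Rightarrow> 'q \<Rightarrow> 'q) \<Rightarrow> 'q set \<Rightarrow> 'q \<Rightarrow> bool" where
  "unit_quantity smul C u \<longleftrightarrow> u \<in> C \<and> (\<forall>x\<in>C. \<exists>l. x = smul l u) \<and>
     (\<forall>l1 l2. smul l1 u = smul l2 u \<longrightarrow> l1 = l2)"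

definition class_add :: "('k::field \<Rightarrow> 'q \<Rightarrow> 'q) \<Rightarrow> 'q set \<Rightarrow> 'q \<Rightarrow> 'q \<Rightarrow> 'q" where
  "class_add smul C x y =
     (let u = (SOME u. unit_quantity smul C u);
          \<rho> = (THE \<rho>. x = smul \<rho> u);
          \<sigma> = (THE \<sigma>. y = smul \<sigma> u)
      in smul (\<rho> + \<sigma>) u)"

definition vector_space_on :: "'v set \<Rightarrow> ('v \<Rightarrow> 'v \<Rightarrow> 'v) \<Rightarrow> ('k::field \<Rightarrow> 'v \<Rightarrow> 'v) \<Rightarrow> bool" where
  "vector_space_on V add smul \<longleftrightarrow>
     (\<forall>x\<in>V. \<forall>y\<in>V. add x y \<in> V) \<and>
     (\<forall>a. \<forall>x\<in>V. smul a x \<in> V) \<and>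
     (\<forall>x\<in>V. \<forall>y\<in>V. \<forall>z\<in>V. add (add x y) z = add x (add y z)) \<and>
     (\<forall>x\<in>V. \<forall>y\<in>V. add x y = add y x) \<and>
     (\<exists>z\<in>V. (\<forall>x\<in>V. add z x = x) \<and> (\<forall>x\<in>V. \<exists>y\<in>V. add x y = z)) \<and>
     (\<forall>a. \<forall>x\<in>V. \<forall>y\<in>V. smul a (add x y) = add (smul a x) (smul a y)) \<and>
     (\<forall>a b. \<forall>x\<in>V. smul (a + b) x = add (smul a x) (smul b x)) \<and>
     (\<forall>a b. \<forall>x\<in>V. smul a (smul b x) = smul (a * b) x) \<and>
     (\<forall>x\<in>V. smul 1 x = x)"

definition vs_zero :: "'v set \<Rightarrow> ('v \<Rightarrow> 'v \<Rightarrow> 'v) \<Rightarrow> 'v" where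
  "vs_zero V add = (THE z. z \<in> V \<and> (\<forall>x\<in>V. add z x = x))"

definition one_dimensional_on :: "'v set \<Rightarrow> ('v \<Rightarrow> 'v \<Rightarrow> 'v) \<Rightarrow> ('k::field \<Rightarrow> 'v \<Rightarrow> 'v) \<Rightarrow> bool" where
  "one_dimensional_on V add smul \<longleftrightarrow> vector_space_on V add smul \<and>
     (\<exists>b\<in>V. (\<forall>a. smul a b = vs_zero V add \<longrightarrow> a = 0) \<and> (\<forall>x\<in>V. \<exists>a. x = smul a b))"

end

theory Submission
  imports Defs
begin

text \<open>Fix a basis \<open>E\<close>. Every quantity is \<open>\<mu> \<cdot> m\<close> for a unique scalar \<open>\<mu>\<close> and a unique
  monomial \<open>m\<close> in \<open>E\<close>, so the class of \<open>\<mu> \<cdot> m\<close> is the line \<open>{\<lambda> \<cdot> m}\<close> and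
  \<open>\<lambda> \<mapsto> \<lambda> \<cdot> m\<close> is injective. Hence every unit quantity \<open>u\<close> of the class parametrises it
  bijectively by \<open>K\<close>, and the class addition is the addition of coefficients with respect
  to \<open>u\<close>; the class is therefore a copy of \<open>K\<close> transported along \<open>\<lambda> \<mapsto> \<lambda> \<cdot> u\<close>.\<close>

lemma one_dimensional_on_range:
  fixes f :: "'k::field \<Rightarrow> 'v"
  assumes "inj f"
    and add: "\<And>a b. add (f a) (f b) = f (a + b)"
    and smul: "\<And>a b. smul a (f b) = f (a * b)"
  shows "one_dimensional_on (range f) add smul"
proof -
  have zero: "vs_zero (range f) add = f 0"
    unfolding vs_zero_def
  proof (rule the_equality)
    fix z assume "z \<in> range f \<and> (\<forall>x\<in>range f. add z x = x)"
    then obtain c where "z = f c" "add z (f 0) = f 0" by blast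
    then show "z = f 0" using add \<open>inj f\<close> by (simp add: inj_eq)
  qed (simp add: add)
  have "vector_space_on (range f) add smul"
    unfolding vector_space_on_def
    by (simp add: add smul algebra_simps) (metis add.right_inverse add_0)
  then show ?thesis
    unfolding one_dimensional_on_def zero
    using \<open>inj f\<close> by (simp add: smul inj_eq) (rule exI[of _ 1], simp)
qed

definition qmonomial :: "'q::comm_monoid_mult set \<Rightarrow> ('q \<Rightarrow> int) \<Rightarrow> 'q" where
  "qmonomial E k = (\<Prod>e\<in>E. zpow_q e (k e))"

lemma scalable_monoid_smul_smul:
  assumes "scalable_monoid smul"
  shows "smul a (smul b x) = smul (a * b) x"
  using assms unfolding scalable_monoid_def by blast

lemma scalable_monoid_smul_one:
  assumes "scalable_monoid smul"
  shows "smul 1 x = x"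
  using assms unfolding scalable_monoid_def by blast

lemma qbasis_expansion:
  assumes "is_qbasis smul E"
  obtains \<mu> k where "x = smul \<mu> (qmonomial E k)"
  using assms unfolding is_qbasis_def qmonomial_def by blast

lemma qbasis_expansion_unique:
  assumes "is_qbasis smul E"
    and "smul \<mu> (qmonomial E k) = smul \<mu>' (qmonomial E k')"
  shows "\<mu> = \<mu>'" and "qmonomial E k = qmonomial E k'"
proof -
  have "\<mu> = \<mu>' \<and> (\<forall>e\<in>E. k e = k' e)"
    using assms unfolding is_qbasis_def qmonomial_def by metis
  then show "\<mu> = \<mu>'" and "qmonomial E k = qmonomial E k'"
    unfolding qmonomial_def by (auto intro: prod.cong)
qed

lemma qsim_class_qmonomial:
  assumes "scalable_monoid smul" and "is_qbasis smul E"
  shows "qsim smul `` {smul \<mu> (qmonomial E k)} = range (\<lambda>l. smul l (qmonomial E k))"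
proof (intro equalityI subsetI)
  fix x assume "x \<in> qsim smul `` {smul \<mu> (qmonomial E k)}"
  then obtain \<alpha> \<beta> where sim: "smul \<alpha> (smul \<mu> (qmonomial E k)) = smul \<beta> x"
    unfolding qsim_def by blast
  obtain \<nu> k' where x: "x = smul \<nu> (qmonomial E k')"
    using qbasis_expansion[OF assms(2)] .
  have "smul (\<alpha> * \<mu>) (qmonomial E k) = smul (\<beta> * \<nu>) (qmonomial E k')"
    using sim unfolding x scalable_monoid_smul_smul[OF assms(1)] .
  then have "qmonomial E k' = qmonomial E k"
    using qbasis_expansion_unique(2)[OF assms(2)] by metis
  then show "x \<in> range (\<lambda>l. smul l (qmonomial E k))" using x by (metis rangeI)
next
  fix x assume "x \<in> range (\<lambda>l. smul l (qmonomial E k))"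
  then obtain l where "x = smul l (qmonomial E k)" by blast
  then have "smul l (smul \<mu> (qmonomial E k)) = smul \<mu> x"
    by (simp add: scalable_monoid_smul_smul[OF assms(1)] mult.commute)
  then show "x \<in> qsim smul `` {smul \<mu> (qmonomial E k)}"
    unfolding qsim_def by blast
qed

lemma inj_smul_qmonomial:
  assumes "is_qbasis smul E"
  shows "inj (\<lambda>l. smul l (qmonomial E k))"
  using qbasis_expansion_unique(1)[OF assms] by (auto intro: injI)

lemma quantity_class_is_line:
  assumes "quantity_space smul" and "C \<in> UNIV // qsim smul"
  obtains m where "C = range (\<lambda>l. smul l m)" and "inj (\<lambda>l. smul l m)"
proof -
  obtain E where sm: "scalable_monoid smul" and E: "is_qbasis smul E"
    using assms(1) unfolding quantity_space_def by blast
  obtain x where "C = qsim smul `` {x}"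
    using assms(2) unfolding quotient_def by blast
  moreover obtain \<mu> k where "x = smul \<mu> (qmonomial E k)"
    using qbasis_expansion[OF E] .
  ultimately show thesis
    using that qsim_class_qmonomial[OF sm E] inj_smul_qmonomial[OF E] by metis
qed

lemma unit_quantity_of_line:
  assumes "scalable_monoid smul" and "inj (\<lambda>l. smul l m)"
  shows "unit_quantity smul (range (\<lambda>l. smul l m)) m"
  using assms unfolding unit_quantity_def inj_def
  by (auto simp: scalable_monoid_smul_one[OF assms(1)] intro: range_eqI[of _ _ 1])

lemma line_eq_unit_quantity_line:
  assumes "scalable_monoid smul" and "unit_quantity smul (range (\<lambda>l. smul l m)) u"
  shows "range (\<lambda>l. smul l u) = range (\<lambda>l. smul l m)"
proof -
  obtain c where "u = smul c m"
    using assms(2) unfolding unit_quantity_def by blast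
  then have "range (\<lambda>l. smul l u) \<subseteq> range (\<lambda>l. smul l m)"
    by (auto simp: scalable_monoid_smul_smul[OF assms(1)])
  moreover have "range (\<lambda>l. smul l m) \<subseteq> range (\<lambda>l. smul l u)"
    using assms(2) unfolding unit_quantity_def by blast
  ultimately show ?thesis by blast
qed

lemma class_add_smul:
  assumes "u = (SOME u. unit_quantity smul C u)" and "unit_quantity smul C u"
  shows "class_add smul C (smul a u) (smul b u) = smul (a + b) u"
proof -
  have "(THE \<rho>. smul c u = smul \<rho> u) = c" for c
    using assms(2) unfolding unit_quantity_def by (intro the_equality) auto
  then show ?thesis
    unfolding class_add_def Let_def assms(1)[symmetric] by simp
qed

theorem proposition3p9:
  fixes smul :: "'k::field \<Rightarrow> 'q::comm_monoid_mult \<Rightarrow> 'q"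
    and C :: "'q set"
  assumes "quantity_space smul"
    and "C \<in> UNIV // qsim smul"
  shows "one_dimensional_on C (class_add smul C) smul"
proof -
  have sm: "scalable_monoid smul"
    using assms(1) unfolding quantity_space_def by blast
  obtain m where C: "C = range (\<lambda>l. smul l m)" and inj_m: "inj (\<lambda>l. smul l m)"
    using quantity_class_is_line[OF assms] .
  define u where "u = (SOME u. unit_quantity smul C u)"
  have u: "unit_quantity smul C u"
    unfolding u_def C using unit_quantity_of_line[OF sm inj_m] by (rule someI)
  have C_u: "C = range (\<lambda>l. smul l u)"
    using line_eq_unit_quantity_line[OF sm] u unfolding C by metis
  have "inj (\<lambda>l. smul l u)"
    using u unfolding unit_quantity_def by (auto intro: injI)
  then have "one_dimensional_on (range (\<lambda>l. smul l u)) (class_add smul C) smul"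
    by (rule one_dimensional_on_range)
      (simp_all add: class_add_smul[OF u_def u] scalable_monoid_smul_smul[OF sm])
  then show ?thesis unfolding C_u[symmetric] .
qed

end
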